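(* The map $\mu$ defined in the context is a probability kernel from $\mathsf{X}$ to $\mathsf{X}$; that is, $\mu(\cdot,B)$ is Borel measurable on $\mathsf{X}$ for every Borel $B\subseteq\mathsf{X}$, and $\mu(\mathsf{x},\cdot)$ is a probability measure on the Borel sets of $\mathsf{X}$ for every $\mathsf{x}\in\mathsf{X}$.
   Context: Fix $\theta_a,\theta_d>0$, positive integers $n,N$, $E=\mathbb{R}^N$, and a Borel probability measure $\eta$ on $E$ with finite mean. For a positive integer $k$, $[k]=\{0,\dots,k-1\}$. Elements of $\{0,1\}^{[n]}$ and $E^{[n+1]}$ are functions; $|\psi|=\sum_{i\in[n]}\psi(i)$. The state space is $\mathsf{X}=\{(\psi,\mathbf{v})\in\{0,1\}^{[n]}\times E^{[n+1]}:\sum_{i\in[n]}\psi(i)(\mathbf{v}(i)-\mathbf{v}(n))=0\}$ with the subspace topology of the product topology (discrete on $\{0,1\}$, Euclidean on $E$). For $i\in[n]$: $r_i(\psi)=\frac{\theta_d\psi(i)+\theta_a(1-\psi(i))}{\theta_d|\psi|+\theta_a(n-|\psi|)}$, and $s_i(\psi)$ agrees with $\psi$ except $s_i(\psi)(i)=1-\psi(i)$. For $\mathsf{x}=(\psi,\mathbf{v})\in\mathsf{X}$ and $i\in[n]$, let $\lambda_i^{\mathsf{x}}$ be the Borel measure on $\{0,1\}^{[n]}\times E^{[n+1]}$ given as the law of $(s_i(\psi),\mathbf{w})$, where $\mathbf{w}(j)=\mathbf{v}(j)$ for $j\in[n]\setminus\{i\}$ and $(\mathbf{w}(i),\mathbf{w}(n))$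 equals: $(\mathbf{v}(i),\mathbf{v}(n))$ if $|\psi|=\psi(i)=1$; $(\mathbf{v}(i),\mathbf{v}(n)-\frac{\mathbf{v}(i)-\mathbf{v}(n)}{|\psi|-1})$ if $|\psi|>\psi(i)=1$; $(\mathbf{x}+\mathbf{v}(n),\frac{\mathbf{x}}{|\psi|+1}+\mathbf{v}(n))$ with $\mathbf{x}\sim\eta$ if $\psi(i)=0$. Define $\mu(\mathsf{x},B)=\sum_{i\in[n]}r_i(\psi)\lambda_i^{\mathsf{x}}(B)$ for Borel sets $B\subseteq\mathsf{X}$ (i.e. the restriction of $\sum_i r_i(\psi)\lambda_i^{\mathsf{x}}$ to Borel subsets of $\mathsf{X}$). *)

theory Defs
  imports "HOL-Probability.Probability"
begin

definition borel_of :: "'a topology \<Rightarrow> 'a measure" where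
  "borel_of T = sigma (topspace T) {S. openin T S}"

text \<open>Ambient space {0,1}^[n] x E^[n+1] with the product topology
  (discrete on {0,1}, Euclidean on E = real^'N). Elements of the
  function spaces are extensional functions on [n] = {..<n}.\<close>
definition amb_top :: "nat \<Rightarrow> ((nat \<Rightarrow> nat) \<times> (nat \<Rightarrow> real^'N)) topology" where
  "amb_top n = prod_topology (product_topology (\<lambda>_. discrete_topology {0,1}) {..<n})
                             (product_topology (\<lambda>_. euclidean) {..<Suc n})"

definition cardpsi :: "nat \<Rightarrow> (nat \<Rightarrow> nat) \<Rightarrow> nat" where
  "cardpsi n \<psi> = (\<Sum>i<n. \<psi> i)"

definition Xset :: "nat \<Rightarrow> ((nat \<Rightarrow> nat) \<times> (nat \<Rightarrow> real^'N)) set" where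
  "Xset n = {(\<psi>, v) \<in> topspace (amb_top n).
              (\<Sum>i<n. real (\<psi> i) *\<^sub>R (v i - v n)) = 0}"

definition XM :: "nat \<Rightarrow> ((nat \<Rightarrow> nat) \<times> (nat \<Rightarrow> real^'N)) measure" where
  "XM n = borel_of (subtopology (amb_top n) (Xset n))"

definition rate :: "real \<Rightarrow> real \<Rightarrow> nat \<Rightarrow> (nat \<Rightarrow> nat) \<Rightarrow> nat \<Rightarrow> real" where
  "rate ta td n \<psi> i =
     (td * real (\<psi> i) + ta * (1 - real (\<psi> i))) /
     (td * real (cardpsi n \<psi>) + ta * (real n - real (cardpsi n \<psi>)))"

definition flip :: "nat \<Rightarrow> (nat \<Rightarrow> nat) \<Rightarrow> nat \<Rightarrow> nat" where
  "flip i \<psi> = \<psi>(i := 1 - \<psi> i)"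

definition lam :: "nat \<Rightarrow> (real^'N) measure \<Rightarrow> nat \<Rightarrow>
      (nat \<Rightarrow> nat) \<times> (nat \<Rightarrow> real^'N) \<Rightarrow> ((nat \<Rightarrow> nat) \<times> (nat \<Rightarrow> real^'N)) measure" where
  "lam n eta i s =
     (case s of (\<psi>, v) \<Rightarrow>
       (if \<psi> i = 1 then
          (if cardpsi n \<psi> = 1 then return (borel_of (amb_top n)) (flip i \<psi>, v)
           else return (borel_of (amb_top n))
                  (flip i \<psi>, v(n := v n - (1 / (real (cardpsi n \<psi>) - 1)) *\<^sub>R (v i - v n))))
        else distr eta (borel_of (amb_top n))
               (\<lambda>x. (flip i \<psi>, v(i := x + v n, n := (1 / (real (cardpsi n \<psi>) + 1)) *\<^sub>R x + v n)))))"

definition mu :: "real \<Rightarrow> real \<Rightarrow> nat \<Rightarrow> (real^'N) measure \<Rightarrow>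
      (nat \<Rightarrow> nat) \<times> (nat \<Rightarrow> real^'N) \<Rightarrow> ((nat \<Rightarrow> nat) \<times> (nat \<Rightarrow> real^'N)) set \<Rightarrow> real" where
  "mu ta td n eta s B = (\<Sum>i<n. rate ta td n (fst s) i * measure (lam n eta i s) B)"

end

theory Submission
  imports Defs
begin

text \<open>Each jump measure \<lambda>_i^x is either a Dirac mass at detach(x) or the image of \<eta> under
  attach(x, \<cdot>), where detach and attach are continuous, hence Borel, maps of the ambient space.
  So x \<mapsto> \<lambda>_i^x is a measurable map into the Giry monad, and \<mu>(\<cdot>, B) is measurable because the
  rates r_i are. Moreover both maps preserve the constraint defining X, which says that v(n) is
  the barycentre of the active positions, so every \<lambda>_i^x is concentrated on X, and \<mu>(x, \<cdot>) is
  a convex combination of probability measures on X.\<close>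

section \<open>Borel sets of a topological space\<close>

lemma space_borel_of [simp]: "space (borel_of T) = topspace T"
  unfolding borel_of_def by (rule space_measure_of) (auto dest: openin_subset)

lemma sets_borel_of: "sets (borel_of T) = sigma_sets (topspace T) {S. openin T S}"
  unfolding borel_of_def by (rule sets_measure_of) (auto dest: openin_subset)

lemma borel_of_open: "openin T S \<Longrightarrow> S \<in> sets (borel_of T)"
  by (simp add: sets_borel_of)

lemma borel_of_euclidean [simp]: "borel_of euclidean = borel"
  unfolding borel_of_def borel_def by simp

lemma sets_borel_of_subtopology:
  assumes "S \<in> sets (borel_of T)"
  shows "sets (borel_of (subtopology T S)) = sets (restrict_space (borel_of T) S)"
proof -
  have S: "S \<in> sigma_sets (topspace T) {U. openin T U}" "S \<subseteq> topspace T"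
    using assms sets.sets_into_space[OF assms] by (simp_all add: sets_borel_of)
  have "{U. openin (subtopology T S) U} = (\<inter>) S ` {U. openin T U}"
    by (auto simp: openin_subtopology)
  then show ?thesis
    using S by (simp add: sets_borel_of sets_restrict_space sigma_sets_Int Int_absorb1)
qed

lemma continuous_map_measurable:
  assumes "continuous_map X Y f"
  shows "f \<in> borel_of X \<rightarrow>\<^sub>M borel_of Y"
  unfolding borel_of_def[of Y]
proof (rule measurable_measure_of)
  show "{S. openin Y S} \<subseteq> Pow (topspace Y)"
    by (auto dest: openin_subset)
  show "f \<in> space (borel_of X) \<rightarrow> topspace Y"
    using assms by (auto simp: continuous_map_def)
  fix U assume "U \<in> {S. openin Y S}"
  then have "openin X {x \<in> topspace X. f x \<in> U}"
    using assms by (auto simp: continuous_map_def)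
  moreover have "{x \<in> topspace X. f x \<in> U} = f -` U \<inter> space (borel_of X)"
    by auto
  ultimately show "f -` U \<inter> space (borel_of X) \<in> sets (borel_of X)"
    by (metis borel_of_open)
qed

text \<open>In a second countable space every open set is a countable union of members of any base,
  so it suffices to test measurability on a base.\<close>
lemma measurable_borel_of_base:
  assumes "second_countable T"
    and base: "\<And>U x. openin T U \<Longrightarrow> x \<in> U \<Longrightarrow> \<exists>W. G W \<and> x \<in> W \<and> W \<subseteq> U"
    and open_base: "\<And>W. G W \<Longrightarrow> openin T W"
    and f: "f \<in> space M \<rightarrow> topspace T"
    and vimage_base: "\<And>W. G W \<Longrightarrow> f -` W \<inter> space M \<in> sets M"
  shows "f \<in> M \<rightarrow>\<^sub>M borel_of T"
  unfolding borel_of_def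
proof (rule measurable_measure_of)
  show "{S. openin T S} \<subseteq> Pow (topspace T)"
    by (auto dest: openin_subset)
  show "f \<in> space M \<rightarrow> topspace T"
    by (rule f)
  fix U assume "U \<in> {S. openin T S}"
  then have U: "openin T U"
    by simp
  obtain \<B> where \<B>: "countable \<B>" "\<And>V. V \<in> \<B> \<Longrightarrow> openin T V"
    "\<And>U x. openin T U \<Longrightarrow> x \<in> U \<Longrightarrow> \<exists>V \<in> \<B>. x \<in> V \<and> V \<subseteq> U"
    using \<open>second_countable T\<close> unfolding second_countable_def by metis
  define J where "J = {B \<in> \<B>. \<exists>W. G W \<and> B \<subseteq> W \<and> W \<subseteq> U}"
  define w where "w B = (SOME W. G W \<and> B \<subseteq> W \<and> W \<subseteq> U)" for B
  have w: "G (w B) \<and> B \<subseteq> w B \<and> w B \<subseteq> U" if "B \<in> J" for B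
    using that unfolding J_def w_def by (metis (mono_tags, lifting) mem_Collect_eq someI_ex)
  have "U = (\<Union>B\<in>J. w B)"
  proof
    show "(\<Union>B\<in>J. w B) \<subseteq> U"
      using w by blast
    show "U \<subseteq> (\<Union>B\<in>J. w B)"
    proof
      fix x assume "x \<in> U"
      then obtain W where W: "G W" "x \<in> W" "W \<subseteq> U"
        using base U by blast
      then obtain V where V: "V \<in> \<B>" "x \<in> V" "V \<subseteq> W"
        using \<B>(3)[OF open_base[OF W(1)]] by blast
      then have "V \<in> J"
        using W unfolding J_def by blast
      then show "x \<in> (\<Union>B\<in>J. w B)"
        using w[of V] V by blast
    qed
  qed
  then have "f -` U \<inter> space M = (\<Union>B\<in>J. f -` w B \<inter> space M)"
    by blast
  also have "\<dots> \<in> sets M"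
    using w vimage_base \<B>(1) unfolding J_def
    by (intro sets.countable_UN'') (auto intro: countable_subset[of _ \<B>])
  finally show "f -` U \<inter> space M \<in> sets M" .
qed

lemma measurable_borel_of_prod_topology:
  assumes "second_countable (prod_topology X Y)"
    and f: "f \<in> M \<rightarrow>\<^sub>M borel_of X" and g: "g \<in> M \<rightarrow>\<^sub>M borel_of Y"
  shows "(\<lambda>x. (f x, g x)) \<in> M \<rightarrow>\<^sub>M borel_of (prod_topology X Y)"
proof (rule measurable_borel_of_base[OF assms(1),
      where G = "\<lambda>W. \<exists>S T. W = S \<times> T \<and> openin X S \<and> openin Y T"])
  fix U p assume "openin (prod_topology X Y) U" "p \<in> U"
  then obtain S T where "openin X S" "openin Y T" "fst p \<in> S" "snd p \<in> T" "S \<times> T \<subseteq> U"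
    by (metis openin_prod_topology_alt prod.collapse)
  then show "\<exists>W. (\<exists>S T. W = S \<times> T \<and> openin X S \<and> openin Y T) \<and> p \<in> W \<and> W \<subseteq> U"
    by (metis mem_Times_iff)
next
  show "openin (prod_topology X Y) W" if "\<exists>S T. W = S \<times> T \<and> openin X S \<and> openin Y T" for W
    using that by (auto simp: openin_prod_Times_iff)
next
  show "(\<lambda>x. (f x, g x)) \<in> space M \<rightarrow> topspace (prod_topology X Y)"
    using measurable_space[OF f] measurable_space[OF g] by auto
next
  fix W assume "\<exists>S T. W = S \<times> T \<and> openin X S \<and> openin Y T"
  then obtain S T where W: "W = S \<times> T" "openin X S" "openin Y T"
    by blast
  have "(\<lambda>x. (f x, g x)) -` W \<inter> space M = (f -` S \<inter> space M) \<inter> (g -` T \<inter> space M)"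
    using W(1) by auto
  also have "\<dots> \<in> sets M"
    using measurable_sets[OF f borel_of_open[OF W(2)]] measurable_sets[OF g borel_of_open[OF W(3)]]
    by (rule sets.Int)
  finally show "(\<lambda>x. (f x, g x)) -` W \<inter> space M \<in> sets M" .
qed

lemma measurable_borel_of_product_topology:
  assumes "second_countable (product_topology X I)"
    and comp: "\<And>i. i \<in> I \<Longrightarrow> (\<lambda>x. f x i) \<in> M \<rightarrow>\<^sub>M borel_of (X i)"
    and ext: "\<And>x. x \<in> space M \<Longrightarrow> f x \<in> extensional I"
  shows "f \<in> M \<rightarrow>\<^sub>M borel_of (product_topology X I)"
proof -
  define C where "C = (\<lambda>F. \<exists>i U. F = {f. f i \<in> U} \<and> i \<in> I \<and> openin (X i) U)"
  define P where "P = product_topology X I"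
  have openin_P: "openin P = arbitrary union_of ((finite intersection_of C) relative_to topspace P)"
    unfolding P_def C_def by (rule openin_product_topology)
  have f_topspace: "f x \<in> topspace P" if "x \<in> space M" for x
  proof -
    have "f x i \<in> topspace (X i)" if "i \<in> I" for i
      using measurable_space[OF comp[OF that]] \<open>x \<in> space M\<close> by simp
    then show ?thesis
      using ext[OF that] unfolding P_def by (simp add: PiE_iff)
  qed
  have vimage_Inter: "{x \<in> space M. f x \<in> \<Inter>\<V>} \<in> sets M" if "finite \<V>" "\<V> \<subseteq> Collect C" for \<V>
    using that
  proof (induction \<V> rule: finite_induct)
    case empty
    then show ?case by simp
  next
    case (insert V \<V>)
    then obtain i U where V: "V = {f. f i \<in> U}" "i \<in> I" "openin (X i) U"
      unfolding C_def by blast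
    have "{x \<in> space M. f x \<in> \<Inter>(insert V \<V>)} =
        ((\<lambda>x. f x i) -` U \<inter> space M) \<inter> {x \<in> space M. f x \<in> \<Inter>\<V>}"
      using V(1) by auto
    also have "\<dots> \<in> sets M"
      using measurable_sets[OF comp[OF V(2)] borel_of_open[OF V(3)]] insert by auto
    finally show ?case .
  qed
  show ?thesis
    unfolding P_def[symmetric]
  proof (rule measurable_borel_of_base[where G = "(finite intersection_of C) relative_to topspace P"])
    show "second_countable P"
      using assms(1) unfolding P_def .
  next
    show "openin P W" if "((finite intersection_of C) relative_to topspace P) W" for W
      unfolding openin_P using that by (rule arbitrary_union_of_inc)
    then show "\<exists>W. ((finite intersection_of C) relative_to topspace P) W \<and> x \<in> W \<and> W \<subseteq> U"
      if "openin P U" "x \<in> U" for U x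
      using that unfolding openin_P union_of_def by blast
  next
    show "f \<in> space M \<rightarrow> topspace P"
      using f_topspace by blast
  next
    fix W assume "((finite intersection_of C) relative_to topspace P) W"
    then obtain \<V> where "finite \<V>" "\<V> \<subseteq> Collect C" "topspace P \<inter> \<Inter>\<V> = W"
      unfolding relative_to_def intersection_of_def by blast
    moreover from this have "f -` W \<inter> space M = {x \<in> space M. f x \<in> \<Inter>\<V>}"
      using f_topspace by blast
    ultimately show "f -` W \<inter> space M \<in> sets M"
      using vimage_Inter by simp
  qed
qed

section \<open>Second countable spaces\<close>

lemma second_countable_finite_topspace:
  assumes "finite (topspace X)"
  shows "second_countable X"
  unfolding second_countable_def
proof (intro exI[of _ "Collect (openin X)"] conjI ballI allI impI)
  have "Collect (openin X) \<subseteq> Pow (topspace X)"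
    by (auto dest: openin_subset)
  then show "countable (Collect (openin X))"
    using assms by (meson countable_finite finite_Pow_iff finite_subset)
qed blast+

lemma second_countable_euclidean:
  "second_countable (euclidean :: 'a::second_countable_topology topology)"
proof -
  obtain \<B> :: "'a set set" where \<B>: "countable \<B>" "topological_basis \<B>"
    using ex_countable_basis by blast
  show ?thesis
    unfolding second_countable_def
  proof (intro exI[of _ \<B>] conjI ballI allI impI)
    show "openin euclidean V" if "V \<in> \<B>" for V
      using \<B>(2) that by (simp add: topological_basis_def)
    show "\<exists>V\<in>\<B>. x \<in> V \<and> V \<subseteq> U" if "openin euclidean U \<and> x \<in> U" for U and x :: 'a
      using \<B>(2) that by (metis open_openin topological_basisE)
  qed (rule \<B>(1))
qed

lemma second_countable_prod_topology:
  assumes "second_countable X" "second_countable Y"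
  shows "second_countable (prod_topology X Y)"
proof -
  obtain \<B>1 where \<B>1: "countable \<B>1" "\<And>V. V \<in> \<B>1 \<Longrightarrow> openin X V"
    "\<And>U x. openin X U \<Longrightarrow> x \<in> U \<Longrightarrow> \<exists>V \<in> \<B>1. x \<in> V \<and> V \<subseteq> U"
    using assms(1) unfolding second_countable_def by metis
  obtain \<B>2 where \<B>2: "countable \<B>2" "\<And>V. V \<in> \<B>2 \<Longrightarrow> openin Y V"
    "\<And>U x. openin Y U \<Longrightarrow> x \<in> U \<Longrightarrow> \<exists>V \<in> \<B>2. x \<in> V \<and> V \<subseteq> U"
    using assms(2) unfolding second_countable_def by metis
  show ?thesis
    unfolding second_countable_def
  proof (intro exI[of _ "(\<lambda>(S, T). S \<times> T) ` (\<B>1 \<times> \<B>2)"] conjI ballI allI impI)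
    show "countable ((\<lambda>(S, T). S \<times> T) ` (\<B>1 \<times> \<B>2))"
      using \<B>1(1) \<B>2(1) by simp
    show "openin (prod_topology X Y) V" if "V \<in> (\<lambda>(S, T). S \<times> T) ` (\<B>1 \<times> \<B>2)" for V
      using that \<B>1(2) \<B>2(2) by (auto simp: openin_prod_Times_iff)
    fix U p assume "openin (prod_topology X Y) U \<and> p \<in> U"
    then obtain S T where ST: "openin X S" "openin Y T" "fst p \<in> S" "snd p \<in> T" "S \<times> T \<subseteq> U"
      by (metis openin_prod_topology_alt prod.collapse)
    obtain V1 V2 where "V1 \<in> \<B>1" "fst p \<in> V1" "V1 \<subseteq> S" "V2 \<in> \<B>2" "snd p \<in> V2" "V2 \<subseteq> T"
      using \<B>1(3)[OF ST(1,3)] \<B>2(3)[OF ST(2,4)] by blast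
    with ST(5) show "\<exists>V \<in> (\<lambda>(S, T). S \<times> T) ` (\<B>1 \<times> \<B>2). p \<in> V \<and> V \<subseteq> U"
      by (intro bexI[of _ "V1 \<times> V2"]) (auto simp: mem_Times_iff)
  qed
qed

text \<open>Restriction to I is a retraction of the second countable function space onto the product.\<close>
lemma second_countable_product_euclidean:
  "second_countable (product_topology (\<lambda>_. euclidean :: 'a::second_countable_topology topology)
      (I :: 'i::countable set))"
proof (rule second_countable_retraction_map_image[OF _ second_countable_euclidean])
  have proj: "continuous_map euclidean euclidean (\<lambda>x::'i \<Rightarrow> 'a. x k)" for k
    by (metis continuous_map_product_projection euclidean_product_topology iso_tuple_UNIV_I)
  have "continuous_map euclidean (product_topology (\<lambda>_. euclidean) I) (\<lambda>v::'i \<Rightarrow> 'a. restrict v I)"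
    using proj by (auto simp: continuous_map_componentwise)
  moreover have "continuous_map (product_topology (\<lambda>_. euclidean) I)
      (product_topology (\<lambda>_. euclidean :: 'a topology) UNIV) (\<lambda>v. v)"
    unfolding continuous_map_componentwise_UNIV
  proof
    fix k
    show "continuous_map (product_topology (\<lambda>_. euclidean) I) euclidean (\<lambda>x::'i \<Rightarrow> 'a. x k)"
    proof (cases "k \<in> I")
      case True
      then show ?thesis by (metis continuous_map_product_projection)
    next
      case False
      have "continuous_map (product_topology (\<lambda>_. euclidean) I) euclidean (\<lambda>x::'i \<Rightarrow> 'a. undefined)"
        by simp
      then show ?thesis
        by (rule continuous_map_eq) (use False in \<open>auto simp: PiE_def extensional_def\<close>)
    qed
  qed
  ultimately show "retraction_map euclidean (product_topology (\<lambda>_. euclidean) I)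
      (\<lambda>v::'i \<Rightarrow> 'a. restrict v I)"
    unfolding retraction_map_def retraction_maps_def euclidean_product_topology
    by (intro exI[of _ "\<lambda>v. v"]) auto
qed

section \<open>Convex combinations of probability measures\<close>

lemma prob_space_convex_combination:
  assumes "finite I"
    and M: "\<And>i. i \<in> I \<Longrightarrow> prob_space (M i)" "\<And>i. i \<in> I \<Longrightarrow> sets (M i) = sets N"
    and r: "\<And>i. i \<in> I \<Longrightarrow> r i \<ge> 0" "(\<Sum>i\<in>I. r i) = 1"
  shows "\<exists>L. prob_space L \<and> sets L = sets N \<and>
    (\<forall>B \<in> sets N. measure L B = (\<Sum>i\<in>I. r i * measure (M i) B))"
proof -
  define \<mu> where "\<mu> B = (\<Sum>i\<in>I. ennreal (r i) * emeasure (M i) B)" for B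
  define L where "L = measure_of (space N) (sets N) \<mu>"
  have countably_additive: "countably_additive (sets N) \<mu>"
    unfolding countably_additive_def
  proof (intro allI impI)
    fix A :: "nat \<Rightarrow> _" assume A: "range A \<subseteq> sets N" "disjoint_family A"
    have "(\<Sum>k. \<mu> (A k)) = (\<Sum>i\<in>I. \<Sum>k. ennreal (r i) * emeasure (M i) (A k))"
      unfolding \<mu>_def by (rule suminf_sum) (rule summableI)
    also have "\<dots> = \<mu> (\<Union> (range A))"
      unfolding \<mu>_def using A M(2) by (intro sum.cong refl) (simp add: suminf_emeasure)
    finally show "(\<Sum>k. \<mu> (A k)) = \<mu> (\<Union> (range A))" .
  qed
  have emeasure_L: "emeasure L B = \<mu> B" if "B \<in> sets N" for B
    unfolding L_def
    by (rule emeasure_measure_of_sigma[OF sets.sigma_algebra_axioms _ countably_additive that])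
      (simp add: positive_def \<mu>_def)
  have sets_L: "sets L = sets N"
    unfolding L_def by simp
  have measure_L: "measure L B = (\<Sum>i\<in>I. r i * measure (M i) B)" if B: "B \<in> sets N" for B
  proof -
    have "\<mu> B = (\<Sum>i\<in>I. ennreal (r i * measure (M i) B))"
      unfolding \<mu>_def
    proof (rule sum.cong[OF refl])
      fix i assume "i \<in> I"
      then have "emeasure (M i) B = ennreal (measure (M i) B)"
        using M B by (simp add: prob_space_def finite_measure.emeasure_eq_measure)
      then show "ennreal (r i) * emeasure (M i) B = ennreal (r i * measure (M i) B)"
        using r(1)[OF \<open>i \<in> I\<close>] by (simp add: ennreal_mult)
    qed
    also have "\<dots> = ennreal (\<Sum>i\<in>I. r i * measure (M i) B)"
      using r(1) by (subst sum_ennreal) auto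
    finally have "emeasure L B = ennreal (\<Sum>i\<in>I. r i * measure (M i) B)"
      using emeasure_L[OF B] by simp
    then show ?thesis
      using r(1) by (simp add: measure_def sum_nonneg)
  qed
  have "emeasure L (space L) = \<mu> (space N)"
    using emeasure_L[of "space N"] by (simp add: L_def)
  also have "\<dots> = (\<Sum>i\<in>I. ennreal (r i))"
    unfolding \<mu>_def using M
    by (intro sum.cong refl) (metis mult.right_neutral prob_space.emeasure_space_1 sets_eq_imp_space_eq)
  also have "\<dots> = 1"
    using r by (subst sum_ennreal) auto
  finally have "prob_space L"
    by (rule prob_spaceI)
  with sets_L measure_L show ?thesis
    by blast
qed

section \<open>The state space and the jump maps\<close>

type_synonym 'N state = "(nat \<Rightarrow> nat) \<times> (nat \<Rightarrow> real^'N)"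

abbreviation psi_top :: "nat \<Rightarrow> (nat \<Rightarrow> nat) topology" where
  "psi_top n \<equiv> product_topology (\<lambda>_. discrete_topology {0, 1}) {..<n}"

abbreviation amb_borel :: "nat \<Rightarrow> ('N::finite) state measure" where
  "amb_borel n \<equiv> borel_of (amb_top n)"

lemma topspace_amb_top:
  "topspace (amb_top n :: ('N::finite) state topology) =
     (\<Pi>\<^sub>E i\<in>{..<n}. {0, 1}) \<times> (\<Pi>\<^sub>E i\<in>{..<Suc n}. UNIV)"
  by (simp add: amb_top_def)

lemma second_countable_amb_top: "second_countable (amb_top n :: ('N::finite) state topology)"
  unfolding amb_top_def
  by (intro second_countable_prod_topology second_countable_product_euclidean
      second_countable_finite_topspace) (simp add: finite_PiE)

lemma mem_Xset_iff:
  "s \<in> Xset n \<longleftrightarrow> fst s \<in> (\<Pi>\<^sub>E i\<in>{..<n}. {0, 1}) \<and> snd s \<in> (\<Pi>\<^sub>E i\<in>{..<Suc n}. UNIV) \<and>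
     (\<Sum>i<n. real (fst s i) *\<^sub>R (snd s i - snd s n)) = 0"
  by (cases s) (simp add: Xset_def topspace_amb_top)

lemma continuous_map_fst_coordinate:
  assumes "j < n"
  shows "continuous_map (amb_top n) (discrete_topology {0, 1}) (\<lambda>s. fst s j)"
proof -
  have "continuous_map (psi_top n) (discrete_topology {0, 1}) (\<lambda>\<psi>. \<psi> j)"
    using assms by (metis continuous_map_product_projection lessThan_iff)
  then show ?thesis
    unfolding amb_top_def using continuous_map_compose[OF continuous_map_fst] by (auto simp: o_def)
qed

lemma continuous_map_snd_coordinate:
  assumes "j \<le> n"
  shows "continuous_map (amb_top n :: ('N::finite) state topology) euclidean (\<lambda>s. snd s j)"
proof -
  have "continuous_map (product_topology (\<lambda>_. euclidean) {..<Suc n}) euclidean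
      (\<lambda>v::nat \<Rightarrow> real^'N. v j)"
    using assms by (metis continuous_map_product_projection lessThan_iff less_Suc_eq_le)
  then show ?thesis
    unfolding amb_top_def using continuous_map_compose[OF continuous_map_snd] by (auto simp: o_def)
qed

lemma measurable_fst_coordinate:
  "j < n \<Longrightarrow> (\<lambda>s. real (fst s j)) \<in> borel_measurable (amb_borel n)"
  using continuous_map_measurable[OF continuous_map_compose[OF continuous_map_fst_coordinate,
      of _ _ euclidean real]] by (simp add: o_def)

lemma measurable_snd_coordinate:
  "j \<le> n \<Longrightarrow> (\<lambda>s. snd s j) \<in> amb_borel n \<rightarrow>\<^sub>M (borel :: (real^'N) measure)"
  using continuous_map_measurable[OF continuous_map_snd_coordinate] by simp

lemma measurable_cardpsi:
  "(\<lambda>s. real (cardpsi n (fst s))) \<in> borel_measurable (amb_borel n)"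
proof -
  have [measurable]: "(\<lambda>s. real (fst s j)) \<in> borel_measurable (amb_borel n)" if "j \<in> {..<n}" for j
    using measurable_fst_coordinate[of j n] that by simp
  show ?thesis
    unfolding cardpsi_def of_nat_sum by measurable
qed

lemma Xset_in_amb_borel: "Xset n \<in> sets (amb_borel n :: ('N::finite) state measure)"
proof -
  have [measurable]: "(\<lambda>s. real (fst s j)) \<in> borel_measurable (amb_borel n)" if "j \<in> {..<n}" for j
    using measurable_fst_coordinate[of j n] that by simp
  have [measurable]: "(\<lambda>s. snd s j) \<in> amb_borel n \<rightarrow>\<^sub>M (borel :: (real^'N) measure)"
    if "j \<in> {..<Suc n}" for j
    using measurable_snd_coordinate[of j n] that by (simp add: less_Suc_eq_le)
  have "Xset n = {s \<in> space (amb_borel n :: 'N state measure).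
      (\<Sum>i<n. real (fst s i) *\<^sub>R (snd s i - snd s n)) = 0}"
    by (auto simp: Xset_def)
  also have "\<dots> \<in> sets (amb_borel n)"
    by measurable
  finally show ?thesis .
qed

lemma space_XM: "space (XM n) = Xset n"
  by (auto simp: XM_def Xset_def)

lemma sets_XM:
  "sets (XM n :: ('N::finite) state measure) = sets (restrict_space (amb_borel n) (Xset n))"
  unfolding XM_def by (rule sets_borel_of_subtopology[OF Xset_in_amb_borel])

lemma sets_XM_iff:
  "B \<in> sets (XM n :: ('N::finite) state measure) \<longleftrightarrow> B \<subseteq> Xset n \<and> B \<in> sets (amb_borel n)"
proof -
  have "Xset n \<inter> space (amb_borel n :: 'N state measure) = Xset n"
    by (auto simp: Xset_def)
  then show ?thesis
    unfolding sets_XM by (simp add: Xset_in_amb_borel sets_restrict_space_iff)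
qed

lemma measurable_XM:
  "f \<in> amb_borel n \<rightarrow>\<^sub>M N \<Longrightarrow> f \<in> (XM n :: ('N::finite) state measure) \<rightarrow>\<^sub>M N"
  unfolding measurable_cong_sets[OF sets_XM refl] by (rule measurable_restrict_space1)

lemma continuous_map_flip:
  assumes "i < n"
  shows "continuous_map (amb_top n :: ('N::finite) state topology) (psi_top n) (\<lambda>s. flip i (fst s))"
  unfolding continuous_map_componentwise
proof (intro conjI ballI)
  show "(\<lambda>s. flip i (fst s)) ` topspace (amb_top n :: 'N state topology) \<subseteq> extensional {..<n}"
    using assms by (auto simp: topspace_amb_top flip_def extensional_def PiE_def)
  fix k assume k: "k \<in> {..<n}"
  have "continuous_map (discrete_topology {0, 1}) (discrete_topology {0, 1}) (\<lambda>a::nat. 1 - a)"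
    by auto
  from continuous_map_compose[OF continuous_map_fst_coordinate[OF assms] this]
  show "continuous_map (amb_top n :: 'N state topology) (discrete_topology {0, 1})
      (\<lambda>s. flip i (fst s) k)"
    using continuous_map_fst_coordinate[of k n] k by (cases "k = i") (auto simp: o_def flip_def)
qed

lemma measurable_amb_borel:
  assumes "f \<in> M \<rightarrow>\<^sub>M borel_of (psi_top n)"
    and "\<And>k. k \<le> n \<Longrightarrow> (\<lambda>x. g x k) \<in> M \<rightarrow>\<^sub>M (borel :: (real^'N) measure)"
    and "\<And>x. x \<in> space M \<Longrightarrow> g x \<in> extensional {..<Suc n}"
  shows "(\<lambda>x. (f x, g x)) \<in> M \<rightarrow>\<^sub>M (amb_borel n :: ('N::finite) state measure)"
  unfolding amb_top_def
proof (rule measurable_borel_of_prod_topology[OF _ assms(1)])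
  show "second_countable (prod_topology (psi_top n)
      (product_topology (\<lambda>_. euclidean :: (real^'N) topology) {..<Suc n}))"
    using second_countable_amb_top[of n] unfolding amb_top_def .
  show "g \<in> M \<rightarrow>\<^sub>M borel_of (product_topology (\<lambda>_. euclidean) {..<Suc n})"
    using assms(2,3)
    by (intro measurable_borel_of_product_topology second_countable_product_euclidean) auto
qed

text \<open>After flipping \<psi>(i), v(n) is moved to the barycentre of the new set of active positions.\<close>
definition detach :: "nat \<Rightarrow> nat \<Rightarrow> ('N::finite) state \<Rightarrow> 'N state" where
  "detach n i s = (flip i (fst s),
     (snd s)(n := snd s n - (1 / (real (cardpsi n (fst s)) - 1)) *\<^sub>R (snd s i - snd s n)))"

definition attach :: "nat \<Rightarrow> nat \<Rightarrow> ('N::finite) state \<Rightarrow> real^'N \<Rightarrow> 'N state" where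
  "attach n i s x = (flip i (fst s),
     (snd s)(i := x + snd s n, n := (1 / (real (cardpsi n (fst s)) + 1)) *\<^sub>R x + snd s n))"

text \<open>Since 1 / 0 = 0, detach leaves v unchanged when |\<psi>| = 1, so it covers both cases
  \<psi>(i) = 1 of the definition of lam.\<close>
lemma lam_eq:
  "lam n eta i s = (if fst s i = 1 then return (amb_borel n) (detach n i s)
     else distr eta (amb_borel n) (attach n i s))"
  by (cases s) (auto simp: lam_def detach_def attach_def[abs_def])

lemma measurable_detach:
  assumes "i < n"
  shows "detach n i \<in> amb_borel n \<rightarrow>\<^sub>M (amb_borel n :: ('N::finite) state measure)"
proof -
  have [measurable]: "(\<lambda>s. snd s i) \<in> amb_borel n \<rightarrow>\<^sub>M (borel :: (real^'N) measure)"
    using assms measurable_snd_coordinate[of i n] by simp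
  have [measurable]: "(\<lambda>s. snd s n) \<in> amb_borel n \<rightarrow>\<^sub>M (borel :: (real^'N) measure)"
    using measurable_snd_coordinate[of n n] by simp
  have [measurable]: "(\<lambda>s. real (cardpsi n (fst s))) \<in> borel_measurable (amb_borel n :: 'N state measure)"
    by (rule measurable_cardpsi)
  show ?thesis
    unfolding detach_def[abs_def]
  proof (rule measurable_amb_borel)
    show "(\<lambda>s. flip i (fst s)) \<in> amb_borel n \<rightarrow>\<^sub>M borel_of (psi_top n)"
      by (rule continuous_map_measurable[OF continuous_map_flip[OF assms]])
    show "(\<lambda>s. ((snd s)(n := snd s n - (1 / (real (cardpsi n (fst s)) - 1)) *\<^sub>R
        (snd s i - snd s n))) k) \<in> (amb_borel n :: 'N state measure) \<rightarrow>\<^sub>M borel" if "k \<le> n" for k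
    proof (cases "k = n")
      case True
      then show ?thesis by simp measurable
    qed (use that in \<open>simp add: measurable_snd_coordinate\<close>)
    show "(snd s)(n := snd s n - (1 / (real (cardpsi n (fst s)) - 1)) *\<^sub>R (snd s i - snd s n))
        \<in> extensional {..<Suc n}" if "s \<in> space (amb_borel n)" for s
      using that by (auto simp: topspace_amb_top PiE_def extensional_def)
  qed
qed

lemma measurable_attach:
  assumes "i < n" and "sets eta = sets (borel :: (real^'N) measure)"
  shows "case_prod (attach n i) \<in> amb_borel n \<Otimes>\<^sub>M eta \<rightarrow>\<^sub>M (amb_borel n :: ('N::finite) state measure)"
proof -
  have [measurable]: "(\<lambda>p. snd (fst p) i) \<in> amb_borel n \<Otimes>\<^sub>M eta \<rightarrow>\<^sub>M (borel :: (real^'N) measure)"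
    using assms measurable_snd_coordinate[of i n] by (intro measurable_compose[OF measurable_fst]) simp
  have [measurable]: "(\<lambda>p. snd (fst p) n) \<in> amb_borel n \<Otimes>\<^sub>M eta \<rightarrow>\<^sub>M (borel :: (real^'N) measure)"
    using measurable_snd_coordinate[of n n] by (intro measurable_compose[OF measurable_fst]) simp
  have [measurable]: "(\<lambda>p. real (cardpsi n (fst (fst p)))) \<in>
      borel_measurable (amb_borel n \<Otimes>\<^sub>M eta :: ('N state \<times> (real^'N)) measure)"
    by (intro measurable_compose[OF measurable_fst] measurable_cardpsi)
  have [measurable]: "snd \<in> amb_borel n \<Otimes>\<^sub>M eta \<rightarrow>\<^sub>M (borel :: (real^'N) measure)"
    by (rule measurable_compose[OF measurable_snd measurable_ident_sets[OF assms(2)]])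
  show ?thesis
    unfolding attach_def case_prod_beta
  proof (rule measurable_amb_borel)
    show "(\<lambda>p. flip i (fst (fst p))) \<in> amb_borel n \<Otimes>\<^sub>M eta \<rightarrow>\<^sub>M borel_of (psi_top n)"
      using continuous_map_measurable[OF continuous_map_flip[OF assms(1)]]
      by (rule measurable_compose[OF measurable_fst])
    show "(\<lambda>p. ((snd (fst p))(i := snd p + snd (fst p) n,
        n := (1 / (real (cardpsi n (fst (fst p))) + 1)) *\<^sub>R snd p + snd (fst p) n)) k)
        \<in> (amb_borel n :: 'N state measure) \<Otimes>\<^sub>M eta \<rightarrow>\<^sub>M borel" if "k \<le> n" for k
    proof (cases "k = n \<or> k = i")
      case True
      with assms(1) show ?thesis
        by (elim disjE) (simp_all, measurable)
    next
      case False
      with that show ?thesis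
        by (simp add: measurable_compose[OF measurable_fst measurable_snd_coordinate])
    qed
    show "(snd (fst p))(i := snd p + snd (fst p) n,
        n := (1 / (real (cardpsi n (fst (fst p))) + 1)) *\<^sub>R snd p + snd (fst p) n)
        \<in> extensional {..<Suc n}" if "p \<in> space (amb_borel n \<Otimes>\<^sub>M eta)" for p
      using that assms(1) by (auto simp: space_pair_measure topspace_amb_top PiE_def extensional_def)
  qed
qed

section \<open>The jump kernel\<close>

lemma measurable_lam:
  assumes "i < n" and "subprob_space eta" and "sets eta = sets (borel :: (real^'N) measure)"
  shows "lam n eta i \<in> amb_borel n \<rightarrow>\<^sub>M subprob_algebra (amb_borel n :: ('N::finite) state measure)"
proof -
  have "{s \<in> space (amb_borel n :: 'N state measure). fst s i = 1} =
      (\<lambda>s. real (fst s i)) -` {1} \<inter> space (amb_borel n)"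
    by auto
  also have "\<dots> \<in> sets (amb_borel n)"
    using measurable_fst_coordinate[OF assms(1)] by (rule measurable_sets) simp
  finally have active:
    "{s \<in> space (amb_borel n :: 'N state measure). fst s i = 1} \<in> sets (amb_borel n)" .
  have "eta \<in> space (subprob_algebra eta)"
    using assms(2) by (simp add: space_subprob_algebra)
  then have "(\<lambda>s. distr eta (amb_borel n) (attach n i s)) \<in>
      amb_borel n \<rightarrow>\<^sub>M subprob_algebra (amb_borel n :: 'N state measure)"
    by (intro measurable_distr2[OF measurable_attach[OF assms(1,3)]] measurable_const)
  moreover have "(\<lambda>s. return (amb_borel n) (detach n i s)) \<in>
      amb_borel n \<rightarrow>\<^sub>M subprob_algebra (amb_borel n :: 'N state measure)"
    by (rule measurable_compose[OF measurable_detach[OF assms(1)] return_measurable])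
  ultimately show ?thesis
    unfolding lam_eq[abs_def] by (intro measurable_If active)
qed

lemma sum_flip:
  assumes "i < n"
  shows "(\<Sum>j<n. real (flip i \<psi> j) *\<^sub>R f j) =
    (\<Sum>j<n. real (\<psi> j) *\<^sub>R f j) + (real (flip i \<psi> i) - real (\<psi> i)) *\<^sub>R (f i :: 'a::real_vector)"
proof -
  have "real (flip i \<psi> j) *\<^sub>R f j = real (\<psi> j) *\<^sub>R f j +
      (if j = i then (real (flip i \<psi> i) - real (\<psi> i)) *\<^sub>R f i else 0)" for j
    by (simp add: flip_def scaleR_diff_left)
  then show ?thesis
    using assms by (simp add: sum.distrib)
qed

lemma cardpsi_flip:
  "i < n \<Longrightarrow> real (cardpsi n (flip i \<psi>)) = real (cardpsi n \<psi>) + (real (flip i \<psi> i) - real (\<psi> i))"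
  using sum_flip[of i n \<psi> "\<lambda>_. 1 :: real"] by (simp add: cardpsi_def)

lemma detach_in_Xset:
  assumes s: "s \<in> Xset n" and i: "i < n" and active: "fst s i = 1"
  shows "detach n i s \<in> Xset n"
proof -
  obtain \<psi> v where s_eq: "s = (\<psi>, v)"
    by (cases s)
  define k where "k = real (cardpsi n \<psi>)"
  define c where "c = 1 / (k - 1)"
  define u where "u = v i - v n"
  define w where "w = v(n := v n - c *\<^sub>R u)"
  have \<psi>: "\<psi> \<in> (\<Pi>\<^sub>E j\<in>{..<n}. {0, 1})" "\<psi> i = 1" and v: "v \<in> (\<Pi>\<^sub>E j\<in>{..<Suc n}. UNIV)"
    and barycentre: "(\<Sum>j<n. real (\<psi> j) *\<^sub>R (v j - v n)) = 0"
    using s active by (simp_all add: mem_Xset_iff s_eq)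
  have flip_i: "flip i \<psi> i = 0"
    using \<psi>(2) by (simp add: flip_def)
  have "(\<Sum>j<n. real (flip i \<psi> j) *\<^sub>R (w j - w n)) =
      (\<Sum>j<n. real (flip i \<psi> j) *\<^sub>R (v j - v n + c *\<^sub>R u))"
    by (intro sum.cong) (auto simp: w_def)
  also have "\<dots> = (\<Sum>j<n. real (\<psi> j) *\<^sub>R (v j - v n + c *\<^sub>R u)) - (u + c *\<^sub>R u)"
    using i flip_i \<psi>(2) by (simp add: sum_flip u_def)
  also have "\<dots> = (\<Sum>j<n. real (\<psi> j) *\<^sub>R (v j - v n)) + k *\<^sub>R c *\<^sub>R u - (u + c *\<^sub>R u)"
    by (simp add: scaleR_right_distrib sum.distrib k_def cardpsi_def sum_distrib_right scaleR_sum_left)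
  also have "\<dots> = ((k - 1) * c - 1) *\<^sub>R u"
    using barycentre by (simp add: algebra_simps)
  finally have sum_w: "(\<Sum>j<n. real (flip i \<psi> j) *\<^sub>R (w j - w n)) = ((k - 1) * c - 1) *\<^sub>R u" .
  have "(\<Sum>j<n. real (flip i \<psi> j) *\<^sub>R (w j - w n)) = 0"
  proof (cases "k = 1")
    case True
    then have "real (cardpsi n (flip i \<psi>)) = 0"
      using cardpsi_flip[OF i, of \<psi>] flip_i \<psi>(2) by (simp add: k_def)
    then have "cardpsi n (flip i \<psi>) = 0"
      by (simp only: of_nat_eq_0_iff)
    then have "flip i \<psi> j = 0" if "j < n" for j
      using that by (simp add: cardpsi_def)
    then show ?thesis
      by simp
  next
    case False
    then show ?thesis
      by (simp add: sum_w c_def)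
  qed
  moreover have "flip i \<psi> \<in> (\<Pi>\<^sub>E j\<in>{..<n}. {0, 1})" "w \<in> (\<Pi>\<^sub>E j\<in>{..<Suc n}. UNIV)"
    using \<psi> v i by (auto simp: flip_def w_def PiE_iff extensional_def)
  moreover have "detach n i s = (flip i \<psi>, w)"
    by (simp add: detach_def s_eq w_def c_def u_def k_def)
  ultimately show ?thesis
    by (simp add: mem_Xset_iff)
qed

lemma attach_in_Xset:
  assumes s: "s \<in> Xset n" and i: "i < n" and inactive: "fst s i \<noteq> 1"
  shows "attach n i s x \<in> Xset n"
proof -
  obtain \<psi> v where s_eq: "s = (\<psi>, v)"
    by (cases s)
  define k where "k = real (cardpsi n \<psi>)"
  define d where "d = 1 / (k + 1)"
  define w where "w = v(i := x + v n, n := d *\<^sub>R x + v n)"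
  have \<psi>: "\<psi> \<in> (\<Pi>\<^sub>E j\<in>{..<n}. {0, 1})" "\<psi> i = 0" and v: "v \<in> (\<Pi>\<^sub>E j\<in>{..<Suc n}. UNIV)"
    and barycentre: "(\<Sum>j<n. real (\<psi> j) *\<^sub>R (v j - v n)) = 0"
    using s inactive i by (auto simp: mem_Xset_iff s_eq PiE_iff)
  have flip_i: "flip i \<psi> i = 1"
    using \<psi>(2) by (simp add: flip_def)
  have "(\<Sum>j<n. real (flip i \<psi> j) *\<^sub>R (w j - w n)) =
      (\<Sum>j<n. real (\<psi> j) *\<^sub>R (w j - w n)) + (w i - w n)"
    using i flip_i \<psi>(2) by (simp add: sum_flip)
  also have "(\<Sum>j<n. real (\<psi> j) *\<^sub>R (w j - w n)) = (\<Sum>j<n. real (\<psi> j) *\<^sub>R (v j - v n - d *\<^sub>R x))"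
    using \<psi>(2) by (intro sum.cong) (auto simp: w_def)
  also have "\<dots> = (\<Sum>j<n. real (\<psi> j) *\<^sub>R (v j - v n)) - k *\<^sub>R d *\<^sub>R x"
    by (simp add: scaleR_diff_right sum_subtractf k_def cardpsi_def sum_distrib_right scaleR_sum_left)
  also have "w i - w n = x - d *\<^sub>R x"
    using i by (simp add: w_def)
  finally have "(\<Sum>j<n. real (flip i \<psi> j) *\<^sub>R (w j - w n)) = (1 - (k + 1) * d) *\<^sub>R x"
    using barycentre by (simp add: algebra_simps)
  also have "(k + 1) * d = 1"
    by (simp add: d_def k_def)
  finally have "(\<Sum>j<n. real (flip i \<psi> j) *\<^sub>R (w j - w n)) = 0"
    by simp
  moreover have "flip i \<psi> \<in> (\<Pi>\<^sub>E j\<in>{..<n}. {0, 1})" "w \<in> (\<Pi>\<^sub>E j\<in>{..<Suc n}. UNIV)"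
    using \<psi> v i by (auto simp: flip_def w_def PiE_iff extensional_def)
  moreover have "attach n i s x = (flip i \<psi>, w)"
    by (simp add: attach_def s_eq w_def d_def k_def)
  ultimately show ?thesis
    by (simp add: mem_Xset_iff)
qed

lemma sets_lam: "sets (lam n eta i s) = sets (amb_borel n)"
  by (simp add: lam_eq)

lemma emeasure_lam_Xset:
  assumes s: "s \<in> Xset n" and i: "i < n"
    and eta: "prob_space eta" "sets eta = sets (borel :: (real^'N) measure)"
  shows "emeasure (lam n eta i s) (Xset n :: ('N::finite) state set) = 1"
proof (cases "fst s i = 1")
  case True
  then show ?thesis
    using detach_in_Xset[OF s i True] by (simp add: lam_eq Xset_in_amb_borel)
next
  case False
  have "s \<in> space (amb_borel n)"
    using s by (auto simp: Xset_def)
  from measurable_Pair2[OF measurable_attach[OF i eta(2)] this]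
  have "attach n i s \<in> eta \<rightarrow>\<^sub>M amb_borel n"
    by simp
  moreover have "attach n i s -` Xset n \<inter> space eta = space eta"
    using attach_in_Xset[OF s i False] by auto
  ultimately show ?thesis
    using False
    by (simp add: lam_eq emeasure_distr Xset_in_amb_borel prob_space.emeasure_space_1[OF eta(1)])
qed

lemma cardpsi_le:
  assumes "\<psi> \<in> (\<Pi>\<^sub>E j\<in>{..<n}. {0, 1})"
  shows "cardpsi n \<psi> \<le> n"
proof -
  have "cardpsi n \<psi> \<le> (\<Sum>j<n. 1)"
    unfolding cardpsi_def using PiE_mem[OF assms] by (intro sum_mono) fastforce
  then show ?thesis
    by simp
qed

lemma rate_nonneg:
  assumes "ta > 0" "td > 0" "\<psi> \<in> (\<Pi>\<^sub>E j\<in>{..<n}. {0, 1})" "i < n"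
  shows "rate ta td n \<psi> i \<ge> 0"
proof -
  have "\<psi> i \<in> {0, 1}"
    using assms(3,4) by auto
  moreover have "real (cardpsi n \<psi>) \<le> real n"
    using cardpsi_le[OF assms(3)] by simp
  ultimately show ?thesis
    using assms(1,2) unfolding rate_def by (auto intro!: divide_nonneg_nonneg)
qed

lemma sum_rate:
  assumes "ta > 0" "td > 0" "n > 0" "\<psi> \<in> (\<Pi>\<^sub>E j\<in>{..<n}. {0, 1})"
  shows "(\<Sum>i<n. rate ta td n \<psi> i) = 1"
proof -
  define k where "k = real (cardpsi n \<psi>)"
  have "k \<le> real n"
    using cardpsi_le[OF assms(4)] by (simp add: k_def)
  then have "td * k + ta * (real n - k) > 0"
    using assms(1-3) by (cases "k = 0") (auto intro: add_pos_nonneg simp: k_def)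
  moreover have "(\<Sum>i<n. td * real (\<psi> i) + ta * (1 - real (\<psi> i))) = td * k + ta * (real n - k)"
    by (simp add: k_def cardpsi_def sum.distrib sum_distrib_left sum_subtractf algebra_simps)
  ultimately show ?thesis
    unfolding rate_def by (simp add: k_def flip: sum_divide_distrib)
qed

lemma measurable_mu:
  assumes eta: "subprob_space eta" "sets eta = sets (borel :: (real^'N) measure)"
    and B: "B \<in> sets (amb_borel n)"
  shows "(\<lambda>s. mu ta td n eta s B) \<in> borel_measurable (amb_borel n :: ('N::finite) state measure)"
proof -
  have [measurable]: "(\<lambda>s. measure (lam n eta i s) B) \<in> borel_measurable (amb_borel n :: 'N state measure)"
    if "i \<in> {..<n}" for i
    using measurable_compose[OF measurable_lam measurable_measure_subprob_algebra[OF B]] that eta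
    by simp
  have [measurable]: "(\<lambda>s. real (fst s i)) \<in> borel_measurable (amb_borel n :: 'N state measure)"
    if "i \<in> {..<n}" for i
    using measurable_fst_coordinate[of i n] that by simp
  have [measurable]: "(\<lambda>s. real (cardpsi n (fst s))) \<in> borel_measurable (amb_borel n :: 'N state measure)"
    by (rule measurable_cardpsi)
  show ?thesis
    unfolding mu_def rate_def by measurable
qed

lemma ex_prob_space_mu:
  assumes "ta > 0" "td > 0" "n > 0"
    and eta: "prob_space eta" "sets eta = sets (borel :: (real^'N) measure)"
    and s: "s \<in> Xset n"
  shows "\<exists>M. prob_space M \<and> sets M = sets (XM n :: ('N::finite) state measure) \<and>
    (\<forall>B \<in> sets (XM n). measure M B = mu ta td n eta s B)"
proof -
  let ?L = "\<lambda>i. restrict_space (lam n eta i s) (Xset n)"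
  have "\<exists>M. prob_space M \<and> sets M = sets (XM n :: 'N state measure) \<and>
      (\<forall>B \<in> sets (XM n). measure M B = (\<Sum>i<n. rate ta td n (fst s) i * measure (?L i) B))"
  proof (rule prob_space_convex_combination)
    show "prob_space (?L i)" if "i \<in> {..<n}" for i
      using that s eta
      by (intro prob_space_restrict_space emeasure_lam_Xset) (auto simp: sets_lam Xset_in_amb_borel)
    show "sets (?L i) = sets (XM n)" for i
      by (simp add: sets_XM sets_lam cong: restrict_space_sets_cong)
    show "rate ta td n (fst s) i \<ge> 0" if "i \<in> {..<n}" for i
      using that s assms(1,2) by (intro rate_nonneg) (auto simp: mem_Xset_iff)
    show "(\<Sum>i<n. rate ta td n (fst s) i) = 1"
      using s assms(1-3) by (intro sum_rate) (auto simp: mem_Xset_iff)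
  qed simp
  moreover have "measure (?L i) B = measure (lam n eta i s) B" if "B \<in> sets (XM n)" for i B
    using that by (intro measure_restrict_space) (auto simp: sets_XM_iff sets_lam Xset_in_amb_borel)
  ultimately show ?thesis
    by (simp add: mu_def)
qed

theorem proposition1:
  fixes ta td :: real and n :: nat and eta :: "(real^'N) measure"
  assumes "ta > 0" and "td > 0" and "n > 0"
    and "prob_space eta" and "sets eta = sets (borel :: (real^'N) measure)"
    and "integrable eta (\<lambda>x. norm x)"
  shows "(\<forall>B \<in> sets (XM n :: ((nat \<Rightarrow> nat) \<times> (nat \<Rightarrow> real^'N)) measure).
            (\<lambda>s. mu ta td n eta s B) \<in> borel_measurable (XM n))
       \<and> (\<forall>s \<in> space (XM n :: ((nat \<Rightarrow> nat) \<times> (nat \<Rightarrow> real^'N)) measure).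
            \<exists>M. prob_space M \<and> sets M = sets (XM n) \<and>
                (\<forall>B \<in> sets (XM n). measure M B = mu ta td n eta s B))"
proof (intro conjI ballI)
  fix B assume "B \<in> sets (XM n :: 'N state measure)"
  then show "(\<lambda>s. mu ta td n eta s B) \<in> borel_measurable (XM n)"
    using assms(4,5)
    by (intro measurable_XM measurable_mu) (auto simp: sets_XM_iff prob_space_imp_subprob_space)
next
  fix s assume "s \<in> space (XM n :: 'N state measure)"
  then show "\<exists>M. prob_space M \<and> sets M = sets (XM n) \<and>
      (\<forall>B \<in> sets (XM n). measure M B = mu ta td n eta s B)"
    using assms(1-5) by (intro ex_prob_space_mu) (simp_all add: space_XM)
qed

end
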